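(* Let $\widehat{\mathbf Y}$ be an optimal solution of the SDP, $\epsilon=\|\widehat{\mathbf Y}-\mathbf Y^*\|_1/\|\mathbf Y^*\|_1$, and let $U_1,\dots,U_k$ be the sets produced by Step 2 applied to the output of Step 1 on input $\widehat{\mathbf Y},n,k$ (both described in the context). Then there exist a permutation $\pi$ of $[k]$ and a universal constant $C>0$ such that \[ \Big|\bigcup_{a\in[k]}C^*_a\cap U_{\pi(a)}\Big|\ge(1-C\epsilon)n. \]
   Context: Integers $n\ge4$, $k\ge2$, $k\mid n$; points $\mathbf h_1,\dots,\mathbf h_n\in\mathbb R^d$ with ground-truth labels $\sigma^*:[n]\to[k]$ and clusters $C^*_a=\{i:\sigma^*(i)=a\}$, each of size $n/k$. $Y^*_{ij}=\mathbb 1\{\sigma^*(i)=\sigma^*(j)\}$. SDP: $A_{ij}=\|\mathbf h_i-\mathbf h_j\|_2^2$; $\widehat{\mathbf Y}$ minimizes $\langle\mathbf Y,\mathbf A\rangle$ subject to $\mathbf Y\mathbf 1_n=\frac nk\mathbf 1_n$, $\mathbf Y\succeq0$, $\mathrm{diag}(\mathbf Y)=\mathbf 1_n$, $\mathbf Y\ge0$. $\|\cdot\|_1$ is the entrywise $\ell_1$ norm; $\widehat{\mathbf Y}_{u\bullet}$ is the $u$-th row. Step 1: set $V=[n]$, $t=0$; while $V\setminus\bigcup_{i\le t}B_i\ne\emptyset$: increase $t$, let $V_t=V\setminus\bigcup_{i<t}B_i$, for $u\in V_t$ let $B(u)=\{w\in V_t:\|\widehat{\mathbf Y}_{u\bullet}-\widehat{\mathbf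 Y}_{w\bullet}\|_1\le\frac{n}{4k}\}$, let $B_t$ be a largest $B(u)$, truncated arbitrarily to size $n/k$ if larger; output $B_1,\dots,B_{k'}$. Step 2: choose the $k$ sets of largest cardinality among $B_1,\dots,B_{k'}$, rename them $U_1,\dots,U_k$, and distribute the elements of the remaining sets arbitrarily among $U_1,\dots,U_k$ so that each $U_t$ has exactly $n/k$ elements. *)

theory Defs
  imports Complex_Main
begin

text \<open>Index sets: points are indexed by [n] = {0..<n}, clusters by [k] = {0..<k}.
  Matrices are functions nat \<Rightarrow> nat \<Rightarrow> real, only entries with indices < n matter.
  Points h_i in R^d are functions nat \<Rightarrow> real, only coordinates < d matter.\<close>

definition sqdist :: "nat \<Rightarrow> (nat \<Rightarrow> nat \<Rightarrow> real) \<Rightarrow> nat \<Rightarrow> nat \<Rightarrow> real" where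
  "sqdist d h i j = (\<Sum>l<d. (h i l - h j l)^2)"

definition frob_inner :: "nat \<Rightarrow> (nat \<Rightarrow> nat \<Rightarrow> real) \<Rightarrow> (nat \<Rightarrow> nat \<Rightarrow> real) \<Rightarrow> real" where
  "frob_inner n Y A = (\<Sum>i<n. \<Sum>j<n. Y i j * A i j)"

definition entry_l1 :: "nat \<Rightarrow> (nat \<Rightarrow> nat \<Rightarrow> real) \<Rightarrow> real" where
  "entry_l1 n Y = (\<Sum>i<n. \<Sum>j<n. \<bar>Y i j\<bar>)"

definition psd :: "nat \<Rightarrow> (nat \<Rightarrow> nat \<Rightarrow> real) \<Rightarrow> bool" where
  "psd n Y \<longleftrightarrow> (\<forall>i<n. \<forall>j<n. Y i j = Y j i) \<and>
     (\<forall>x :: nat \<Rightarrow> real. (\<Sum>i<n. \<Sum>j<n. x i * Y i j * x j) \<ge> 0)"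

definition sdp_feasible :: "nat \<Rightarrow> nat \<Rightarrow> (nat \<Rightarrow> nat \<Rightarrow> real) \<Rightarrow> bool" where
  "sdp_feasible n k Y \<longleftrightarrow>
     (\<forall>i<n. (\<Sum>j<n. Y i j) = real n / real k) \<and> psd n Y \<and>
     (\<forall>i<n. Y i i = 1) \<and> (\<forall>i<n. \<forall>j<n. Y i j \<ge> 0)"

definition sdp_optimal :: "nat \<Rightarrow> nat \<Rightarrow> nat \<Rightarrow> (nat \<Rightarrow> nat \<Rightarrow> real) \<Rightarrow> (nat \<Rightarrow> nat \<Rightarrow> real) \<Rightarrow> bool" where
  "sdp_optimal n k d h Y \<longleftrightarrow> sdp_feasible n k Y \<and>
     (\<forall>Y'. sdp_feasible n k Y' \<longrightarrow> frob_inner n Y (sqdist d h) \<le> frob_inner n Y' (sqdist d h))"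

definition Ystar :: "(nat \<Rightarrow> nat) \<Rightarrow> nat \<Rightarrow> nat \<Rightarrow> real" where
  "Ystar \<sigma> i j = (if \<sigma> i = \<sigma> j then 1 else 0)"

definition cluster :: "nat \<Rightarrow> (nat \<Rightarrow> nat) \<Rightarrow> nat \<Rightarrow> nat set" where
  "cluster n \<sigma> a = {i. i < n \<and> \<sigma> i = a}"

definition rowdist :: "nat \<Rightarrow> (nat \<Rightarrow> nat \<Rightarrow> real) \<Rightarrow> nat \<Rightarrow> nat \<Rightarrow> real" where
  "rowdist n Y u w = (\<Sum>j<n. \<bar>Y u j - Y w j\<bar>)"

definition ballB :: "nat \<Rightarrow> nat \<Rightarrow> (nat \<Rightarrow> nat \<Rightarrow> real) \<Rightarrow> nat set \<Rightarrow> nat \<Rightarrow> nat set" where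
  "ballB n k Y V u = {w \<in> V. rowdist n Y u w \<le> real n / (4 * real k)}"

text \<open>Bs = [B_1,...,B_k'] is a possible output of Step 1 (all arbitrary choices allowed).
  Bs ! t is B_{t+1}; the remaining set V_{t+1} is [n] minus the earlier blocks.\<close>
definition step1_output :: "nat \<Rightarrow> nat \<Rightarrow> (nat \<Rightarrow> nat \<Rightarrow> real) \<Rightarrow> nat set list \<Rightarrow> bool" where
  "step1_output n k Y Bs \<longleftrightarrow>
     (\<forall>t<length Bs.
        let V = {0..<n} - (\<Union>i<t. Bs ! i) in
        V \<noteq> {} \<and>
        (\<exists>u\<in>V. (\<forall>w\<in>V. card (ballB n k Y V w) \<le> card (ballB n k Y V u)) \<and>
                Bs ! t \<subseteq> ballB n k Y V u \<and>
                card (Bs ! t) = min (card (ballB n k Y V u)) (n div k))) \<and>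
     (\<Union>i<length Bs. Bs ! i) = {0..<n}"

definition step2_output :: "nat \<Rightarrow> nat \<Rightarrow> nat set list \<Rightarrow> (nat \<Rightarrow> nat set) \<Rightarrow> bool" where
  "step2_output n k Bs U \<longleftrightarrow>
     (\<exists>J :: nat \<Rightarrow> nat.
        inj_on J {..<k} \<and> J ` {..<k} \<subseteq> {..<length Bs} \<and>
        (\<forall>a<k. \<forall>i<length Bs. i \<notin> J ` {..<k} \<longrightarrow> card (Bs ! i) \<le> card (Bs ! J a)) \<and>
        (\<forall>a<k. Bs ! J a \<subseteq> U a \<and> card (U a) = n div k) \<and>
        (\<forall>a<k. \<forall>b<k. a \<noteq> b \<longrightarrow> U a \<inter> U b = {}) \<and>
        (\<Union>a<k. U a) = {0..<n})"

end

theory Submission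
  imports Defs
begin

text \<open>Call a point good if its row of \<open>Y\<close> is within \<open>n/(8k)\<close> of its row of \<open>Y\<^sup>*\<close> in \<open>\<ell>\<^sub>1\<close>;
  by Markov's inequality at most \<open>8\<epsilon>n\<close> points are bad. By the triangle inequality, good points
  of one cluster are within \<open>n/(4k)\<close> of each other, while good points of different clusters
  cannot both be within \<open>n/(4k)\<close> of a common row. So the good points of each block of Step 1 lie
  in one cluster, and the first block meeting the good part of a cluster is at least as large
  as that good part. Every good point outside the first block of its cluster is paid for by a
  bad point in that block; and a cluster whose first block Step 2 discards is no larger than
  any selected block, in particular than those selected blocks that are nobody's first block,
  which again consist of such paid-for points. Altogether at most \<open>4\<close> points per bad point are
  lost, i.e. \<open>32\<epsilon>n\<close>.\<close>

lemma inj_on_extends_to_bij: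
  assumes "finite A" "inj_on p S" "S \<subseteq> A" "p ` S \<subseteq> A"
  shows "\<exists>\<pi>. bij_betw \<pi> A A \<and> (\<forall>a\<in>S. \<pi> a = p a)"
proof -
  have "finite S" using assms(1,3) by (rule finite_subset[rotated])
  then have "card (A - S) = card (A - p ` S)"
    using assms by (simp add: card_Diff_subset card_image)
  then obtain q where q: "bij_betw q (A - S) (A - p ` S)"
    using assms(1) finite_same_card_bij by blast
  define \<pi> where "\<pi> a = (if a \<in> S then p a else q a)" for a
  have "bij_betw \<pi> S (p ` S)"
    using assms(2) by (auto simp: bij_betw_def \<pi>_def inj_on_def)
  moreover have "bij_betw \<pi> (A - S) (A - p ` S)"
    using q by (rule bij_betw_cong[THEN iffD1, rotated]) (auto simp: \<pi>_def)
  ultimately have "bij_betw \<pi> (S \<union> (A - S)) (p ` S \<union> (A - p ` S))"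
    by (rule bij_betw_combine) auto
  moreover have "S \<union> (A - S) = A" "p ` S \<union> (A - p ` S) = A"
    using assms by auto
  ultimately show ?thesis by (auto simp: \<pi>_def)
qed

lemma card_gt_mult_le_sum:
  fixes f :: "'a \<Rightarrow> real"
  assumes "finite A" "\<And>x. x \<in> A \<Longrightarrow> 0 \<le> f x"
  shows "real (card {x \<in> A. t < f x}) * t \<le> sum f A"
proof -
  have "real (card {x \<in> A. t < f x}) * t = (\<Sum>x\<in>{x \<in> A. t < f x}. t)" by simp
  also have "\<dots> \<le> (\<Sum>x\<in>{x \<in> A. t < f x}. f x)" by (rule sum_mono) simp
  also have "\<dots> \<le> sum f A" using assms by (intro sum_mono2) auto
  finally show ?thesis .
qed

definition row_err :: "nat \<Rightarrow> (nat \<Rightarrow> nat \<Rightarrow> real) \<Rightarrow> (nat \<Rightarrow> nat) \<Rightarrow> nat \<Rightarrow> real" where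
  "row_err n Y \<sigma> u = (\<Sum>j<n. \<bar>Y u j - Ystar \<sigma> u j\<bar>)"

lemma row_err_nonneg: "0 \<le> row_err n Y \<sigma> u"
  by (simp add: row_err_def sum_nonneg)

lemma entry_l1_diff_Ystar: "entry_l1 n (\<lambda>i j. Y i j - Ystar \<sigma> i j) = (\<Sum>u<n. row_err n Y \<sigma> u)"
  by (simp add: entry_l1_def row_err_def)

lemma entry_l1_Ystar:
  assumes "\<forall>i<n. \<sigma> i < k" "\<forall>a<k. card (cluster n \<sigma> a) = N"
  shows "entry_l1 n (Ystar \<sigma>) = real n * real N"
proof -
  have "(\<Sum>j<n. \<bar>Ystar \<sigma> i j\<bar>) = real N" if "i < n" for i
  proof -
    have "(\<Sum>j<n. \<bar>Ystar \<sigma> i j\<bar>) = (\<Sum>j<n. if j \<in> cluster n \<sigma> (\<sigma> i) then 1 else 0)"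
      by (rule sum.cong) (auto simp: Ystar_def cluster_def)
    also have "\<dots> = real (card (cluster n \<sigma> (\<sigma> i)))"
      by (subst sum.If_cases) (auto simp: cluster_def Int_def)
    finally show ?thesis using assms that by simp
  qed
  then show ?thesis by (simp add: entry_l1_def)
qed

lemma rowdist_le_row_err_add:
  assumes "\<sigma> g = \<sigma> g'"
  shows "rowdist n Y g g' \<le> row_err n Y \<sigma> g + row_err n Y \<sigma> g'"
proof -
  have "\<bar>Y g j - Y g' j\<bar> \<le> \<bar>Y g j - Ystar \<sigma> g j\<bar> + \<bar>Y g' j - Ystar \<sigma> g' j\<bar>" for j
    using assms by (simp add: Ystar_def)
  then show ?thesis
    unfolding rowdist_def row_err_def sum.distrib[symmetric] by (rule sum_mono)
qed

text \<open>Rows of points in different clusters of \<open>Y\<^sup>*\<close> differ on a whole cluster.\<close>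
lemma card_cluster_le_row_err_rowdist:
  assumes "\<sigma> w \<noteq> \<sigma> w'"
  shows "real (card (cluster n \<sigma> (\<sigma> w)))
    \<le> row_err n Y \<sigma> w + rowdist n Y u w + rowdist n Y u w' + row_err n Y \<sigma> w'"
proof -
  have "real (card (cluster n \<sigma> (\<sigma> w))) = (\<Sum>j\<in>cluster n \<sigma> (\<sigma> w). \<bar>Ystar \<sigma> w j - Ystar \<sigma> w' j\<bar>)"
    using assms by (simp add: Ystar_def cluster_def)
  also have "\<dots> \<le> (\<Sum>j<n. \<bar>Ystar \<sigma> w j - Ystar \<sigma> w' j\<bar>)"
    by (rule sum_mono2) (auto simp: cluster_def)
  also have "\<dots> \<le> (\<Sum>j<n. \<bar>Y w j - Ystar \<sigma> w j\<bar> + \<bar>Y u j - Y w j\<bar> + \<bar>Y u j - Y w' j\<bar>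
                          + \<bar>Y w' j - Ystar \<sigma> w' j\<bar>)"
    by (rule sum_mono) linarith
  also have "\<dots> = row_err n Y \<sigma> w + rowdist n Y u w + rowdist n Y u w' + row_err n Y \<sigma> w'"
    by (simp add: sum.distrib rowdist_def row_err_def)
  finally show ?thesis .
qed

locale step1_run =
  fixes n k :: nat and Y :: "nat \<Rightarrow> nat \<Rightarrow> real" and \<sigma> :: "nat \<Rightarrow> nat" and Bs :: "nat set list"
  assumes k_pos: "0 < k" and k_dvd_n: "k dvd n"
    and \<sigma>_less: "\<And>i. i < n \<Longrightarrow> \<sigma> i < k"
    and card_cluster: "\<And>a. a < k \<Longrightarrow> card (cluster n \<sigma> a) = n div k"
    and step1: "step1_output n k Y Bs"
begin

definition good :: "nat set" where
  "good = {u \<in> {0..<n}. row_err n Y \<sigma> u \<le> real n / (8 * real k)}"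

definition bad :: "nat set" where
  "bad = {u \<in> {0..<n}. real n / (8 * real k) < row_err n Y \<sigma> u}"

definition core :: "nat \<Rightarrow> nat set" where
  "core a = cluster n \<sigma> a \<inter> good"

definition remaining :: "nat \<Rightarrow> nat set" where
  "remaining t = {0..<n} - (\<Union>i<t. Bs ! i)"

definition represented :: "nat set" where
  "represented = {a. a < k \<and> core a \<noteq> {}}"

definition first_block :: "nat \<Rightarrow> nat" where
  "first_block a = (LEAST t. Bs ! t \<inter> core a \<noteq> {})"

lemma step1_block:
  assumes "t < length Bs"
  obtains u where "u \<in> remaining t"
    "\<And>w. w \<in> remaining t \<Longrightarrow>
       card (ballB n k Y (remaining t) w) \<le> card (ballB n k Y (remaining t) u)"
    "Bs ! t \<subseteq> ballB n k Y (remaining t) u"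
    "card (Bs ! t) = min (card (ballB n k Y (remaining t) u)) (n div k)"
proof -
  have "\<forall>t<length Bs. let V = remaining t in V \<noteq> {} \<and>
        (\<exists>u\<in>V. (\<forall>w\<in>V. card (ballB n k Y V w) \<le> card (ballB n k Y V u)) \<and>
                Bs ! t \<subseteq> ballB n k Y V u \<and> card (Bs ! t) = min (card (ballB n k Y V u)) (n div k))"
    using step1 unfolding step1_output_def remaining_def by (rule conjunct1)
  then show ?thesis using assms that unfolding Let_def by blast
qed

lemma blocks_cover: "(\<Union>t<length Bs. Bs ! t) = {0..<n}"
  using step1 unfolding step1_output_def by simp

lemma block_subset_remaining: "t < length Bs \<Longrightarrow> Bs ! t \<subseteq> remaining t"
  by (erule step1_block) (auto simp: ballB_def)

lemma block_subset: "t < length Bs \<Longrightarrow> Bs ! t \<subseteq> {0..<n}"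
  using block_subset_remaining by (auto simp: remaining_def)

lemma finite_block: "t < length Bs \<Longrightarrow> finite (Bs ! t)"
  using block_subset finite_subset by blast

lemma blocks_disjoint:
  assumes "s < length Bs" "t < length Bs" "s \<noteq> t"
  shows "Bs ! s \<inter> Bs ! t = {}"
proof -
  have "Bs ! s \<inter> Bs ! t = {}" if "s < t" "t < length Bs" for s t
    using block_subset_remaining[OF that(2)] that(1) by (auto simp: remaining_def)
  then show ?thesis using assms by (metis Int_commute linorder_neqE_nat)
qed

lemma good_bad_partition: "good \<union> bad = {0..<n}" "good \<inter> bad = {}"
  by (auto simp: good_def bad_def)

lemma core_disjoint: "a \<noteq> b \<Longrightarrow> core a \<inter> core b = {}"
  by (auto simp: core_def cluster_def)

lemma finite_core: "finite (core a)"
  by (simp add: core_def cluster_def)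

lemma card_core_le_div: "a < k \<Longrightarrow> card (core a) \<le> n div k"
  using card_cluster card_mono[of "cluster n \<sigma> a" "core a"] by (auto simp: core_def cluster_def)

lemma good_in_core: "x \<in> good \<Longrightarrow> x \<in> core (\<sigma> x)"
  by (simp add: good_def core_def cluster_def)

lemma good_block_same_cluster:
  assumes t: "t < length Bs" and x: "x \<in> Bs ! t \<inter> good" and y: "y \<in> Bs ! t \<inter> good"
  shows "\<sigma> x = \<sigma> y"
proof (rule ccontr)
  assume ne: "\<sigma> x \<noteq> \<sigma> y"
  obtain u where "Bs ! t \<subseteq> ballB n k Y (remaining t) u" using t by (rule step1_block)
  then have "rowdist n Y u x \<le> real n / (4 * real k)" "rowdist n Y u y \<le> real n / (4 * real k)"
    using x y by (auto simp: ballB_def)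
  moreover have "row_err n Y \<sigma> x \<le> real n / (8 * real k)" "row_err n Y \<sigma> y \<le> real n / (8 * real k)"
    and "x < n" using x y by (auto simp: good_def)
  moreover have "real (card (cluster n \<sigma> (\<sigma> x))) = real n / real k"
    using \<open>x < n\<close> \<sigma>_less card_cluster k_dvd_n by (simp add: real_of_nat_div)
  ultimately have "real n / real k \<le> 3 * (real n / (4 * real k))"
    using card_cluster_le_row_err_rowdist[of \<sigma> x y n Y u] ne by simp
  then show False using \<open>x < n\<close> k_pos by (simp add: field_simps)
qed

lemma core_subset_ball:
  assumes "g \<in> core a" "core a \<subseteq> V"
  shows "core a \<subseteq> ballB n k Y V g"
proof
  fix x assume x: "x \<in> core a"
  have "rowdist n Y g x \<le> row_err n Y \<sigma> g + row_err n Y \<sigma> x"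
    using assms(1) x by (intro rowdist_le_row_err_add) (simp add: core_def cluster_def)
  also have "\<dots> \<le> real n / (4 * real k)"
    using assms(1) x by (simp add: core_def good_def)
  finally show "x \<in> ballB n k Y V g" using assms(2) x by (auto simp: ballB_def)
qed

lemma first_block:
  assumes "a \<in> represented"
  shows "first_block a < length Bs" "Bs ! first_block a \<inter> core a \<noteq> {}"
    "core a \<subseteq> remaining (first_block a)"
proof -
  obtain g where g: "g \<in> core a" using assms by (auto simp: represented_def)
  then have "g \<in> (\<Union>t<length Bs. Bs ! t)" by (simp add: blocks_cover core_def good_def)
  then obtain t where t: "t < length Bs" "Bs ! t \<inter> core a \<noteq> {}" using g by blast
  then show "first_block a < length Bs" unfolding first_block_def
    by (meson Least_le order.strict_trans1)
  show "Bs ! first_block a \<inter> core a \<noteq> {}"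
    unfolding first_block_def by (rule LeastI[of _ t]) (rule t(2))
  have "x \<notin> Bs ! i" if "x \<in> core a" "i < first_block a" for x i
    using not_less_Least[OF that(2)[unfolded first_block_def]] that(1) by blast
  then show "core a \<subseteq> remaining (first_block a)"
    by (auto simp: remaining_def core_def good_def)
qed

lemma card_core_le_first_block:
  assumes "a \<in> represented"
  shows "card (core a) \<le> card (Bs ! first_block a)"
proof -
  let ?t = "first_block a"
  let ?ball = "ballB n k Y (remaining ?t)"
  obtain u where u: "\<And>w. w \<in> remaining ?t \<Longrightarrow> card (?ball w) \<le> card (?ball u)"
    "card (Bs ! ?t) = min (card (?ball u)) (n div k)"
    using first_block(1)[OF assms] by (rule step1_block) blast
  obtain g where g: "g \<in> core a" using assms by (auto simp: represented_def)
  have "finite (?ball g)" by (auto simp: ballB_def remaining_def)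
  then have "card (core a) \<le> card (?ball g)"
    using core_subset_ball[OF g first_block(3)[OF assms]] by (rule card_mono)
  also have "\<dots> \<le> card (?ball u)" using u(1) g first_block(3)[OF assms] by blast
  finally show ?thesis using u(2) card_core_le_div assms by (simp add: represented_def)
qed

lemma good_first_block_subset_core:
  assumes "a \<in> represented"
  shows "good \<inter> Bs ! first_block a \<subseteq> core a"
proof
  fix x assume x: "x \<in> good \<inter> Bs ! first_block a"
  obtain y where y: "y \<in> Bs ! first_block a" "y \<in> core a" using first_block(2)[OF assms] by blast
  then have "\<sigma> x = \<sigma> y"
    using good_block_same_cluster[OF first_block(1)[OF assms], of x y] x by (simp add: core_def)
  then show "x \<in> core a" using x y(2) good_in_core by (auto simp: core_def cluster_def)
qed

lemma inj_on_first_block: "inj_on first_block represented"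
proof (rule inj_onI)
  fix a b assume a: "a \<in> represented" and b: "b \<in> represented"
    and eq: "first_block a = first_block b"
  obtain x where x: "x \<in> Bs ! first_block a" "x \<in> core a" using first_block(2)[OF a] by blast
  obtain y where y: "y \<in> Bs ! first_block a" "y \<in> core b" using first_block(2)[OF b] eq by auto
  have "\<sigma> x = \<sigma> y"
    using good_block_same_cluster[OF first_block(1)[OF a], of x y] x y by (simp add: core_def)
  then show "a = b" using x(2) y(2) by (simp add: core_def cluster_def)
qed

lemma card_core_le_first_block_split:
  assumes "a \<in> represented"
  shows "card (core a) \<le> card (core a \<inter> Bs ! first_block a) + card (bad \<inter> Bs ! first_block a)"
proof -
  have "Bs ! first_block a \<subseteq> (core a \<inter> Bs ! first_block a) \<union> (bad \<inter> Bs ! first_block a)"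
    using good_first_block_subset_core[OF assms] block_subset[OF first_block(1)[OF assms]]
      good_bad_partition(1) by blast
  then have "card (Bs ! first_block a)
      \<le> card ((core a \<inter> Bs ! first_block a) \<union> (bad \<inter> Bs ! first_block a))"
    using finite_core by (intro card_mono) (auto simp: bad_def)
  also have "\<dots> \<le> card (core a \<inter> Bs ! first_block a) + card (bad \<inter> Bs ! first_block a)"
    by (rule card_Un_le)
  finally show ?thesis using card_core_le_first_block[OF assms] by simp
qed

lemma finite_represented: "finite represented"
  by (simp add: represented_def)

lemma first_blocks_disjoint:
  assumes "a \<in> represented" "b \<in> represented" "a \<noteq> b"
  shows "Bs ! first_block a \<inter> Bs ! first_block b = {}"
  using assms blocks_disjoint first_block(1) inj_on_first_block by (simp add: inj_on_eq_iff)

lemma sum_card_bad_first_blocks: "(\<Sum>a\<in>represented. card (bad \<inter> Bs ! first_block a)) \<le> card bad"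
proof -
  have "(\<Sum>a\<in>represented. card (bad \<inter> Bs ! first_block a))
      = card (\<Union>a\<in>represented. bad \<inter> Bs ! first_block a)"
    using first_blocks_disjoint
    by (intro card_UN_disjoint[symmetric] finite_represented) (auto simp: bad_def)
  also have "\<dots> \<le> card bad" by (intro card_mono) (auto simp: bad_def)
  finally show ?thesis .
qed

lemma sum_card_core_add_card_bad: "(\<Sum>a\<in>represented. card (core a)) + card bad = n"
proof -
  have "good = (\<Union>a\<in>represented. core a)"
    using good_in_core \<sigma>_less by (auto simp: represented_def core_def good_def)
  then have "card good = (\<Sum>a\<in>represented. card (core a))"
    using finite_represented finite_core core_disjoint by (simp add: card_UN_disjoint)
  moreover have "card good + card bad = n"
    using good_bad_partition card_Un_disjoint[of good bad]
    by (metis card_atLeastLessThan diff_zero finite_Un finite_atLeastLessThan)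
  ultimately show ?thesis by simp
qed

lemma other_blocks_subset:
  "(\<Union>t\<in>{..<length Bs} - first_block ` represented. Bs ! t)
    \<subseteq> bad \<union> (\<Union>a\<in>represented. core a - Bs ! first_block a)"
proof
  fix x assume "x \<in> (\<Union>t\<in>{..<length Bs} - first_block ` represented. Bs ! t)"
  then obtain t where t: "t < length Bs" "t \<notin> first_block ` represented" "x \<in> Bs ! t" by blast
  show "x \<in> bad \<union> (\<Union>a\<in>represented. core a - Bs ! first_block a)"
  proof (cases "x \<in> good")
    case False
    then show ?thesis using t block_subset good_bad_partition(1) by blast
  next
    case True
    then have x: "x \<in> core (\<sigma> x)" "\<sigma> x \<in> represented"
      using good_in_core \<sigma>_less by (auto simp: represented_def good_def)
    then have "x \<notin> Bs ! first_block (\<sigma> x)"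
      using t blocks_disjoint[OF t(1) first_block(1)] by blast
    then show ?thesis using x by blast
  qed
qed

text \<open>Each good point missed by the first block of its cluster is paid for by a bad point of
  that block.\<close>
lemma sum_card_other_blocks:
  "(\<Sum>t\<in>{..<length Bs} - first_block ` represented. card (Bs ! t)) \<le> 2 * card bad"
proof -
  let ?O = "{..<length Bs} - first_block ` represented"
  have "(\<Sum>t\<in>?O. card (Bs ! t)) = card (\<Union>t\<in>?O. Bs ! t)"
    using blocks_disjoint finite_block by (intro card_UN_disjoint[symmetric]) auto
  also have "\<dots> \<le> card (bad \<union> (\<Union>a\<in>represented. core a - Bs ! first_block a))"
    using finite_represented finite_core other_blocks_subset
    by (intro card_mono) (simp_all add: bad_def)
  also have "\<dots> \<le> card bad + (\<Sum>a\<in>represented. card (core a - Bs ! first_block a))"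
    using card_Un_le[of bad "\<Union>a\<in>represented. core a - Bs ! first_block a"]
      card_UN_le[OF finite_represented, of "\<lambda>a. core a - Bs ! first_block a"]
    by linarith
  also have "\<dots> \<le> card bad + (\<Sum>a\<in>represented. card (bad \<inter> Bs ! first_block a))"
  proof -
    have "card (core a - Bs ! first_block a) \<le> card (bad \<inter> Bs ! first_block a)"
      if "a \<in> represented" for a
      using card_core_le_first_block_split[OF that] finite_core
        card_Diff_subset_Int[of "core a" "Bs ! first_block a"]
      by (simp add: Int_commute)
    then show ?thesis by (simp add: sum_mono)
  qed
  finally show ?thesis using sum_card_bad_first_blocks by linarith
qed

end

locale step2_run = step1_run +
  fixes J :: "nat \<Rightarrow> nat" and U :: "nat \<Rightarrow> nat set"
  assumes J_inj: "inj_on J {..<k}" and J_less: "J ` {..<k} \<subseteq> {..<length Bs}"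
    and J_largest: "\<And>a i. a < k \<Longrightarrow> i < length Bs \<Longrightarrow> i \<notin> J ` {..<k} \<Longrightarrow>
      card (Bs ! i) \<le> card (Bs ! J a)"
    and J_subset_U: "\<And>a. a < k \<Longrightarrow> Bs ! J a \<subseteq> U a"
begin

definition selected :: "nat set" where
  "selected = {a \<in> represented. first_block a \<in> J ` {..<k}}"

lemma selected_subset: "selected \<subseteq> represented"
  by (auto simp: selected_def)

lemma finite_selected: "finite selected"
  using finite_represented selected_subset by (rule finite_subset[rotated])

lemma card_unselected_le:
  "card (represented - selected) \<le> card (J ` {..<k} - first_block ` represented)"
proof -
  have "J ` {..<k} \<inter> first_block ` represented = first_block ` selected"
    unfolding selected_def
    by (auto intro!: imageI) (metis (mono_tags, lifting) image_eqI lessThan_iff mem_Collect_eq)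
  moreover have "card (first_block ` selected) = card selected"
    using inj_on_subset[OF inj_on_first_block selected_subset] by (rule card_image)
  moreover have "card (J ` {..<k}) = k" using J_inj by (simp add: card_image)
  moreover have "card represented \<le> k"
    using card_mono[of "{..<k}" represented] by (auto simp: represented_def)
  ultimately show ?thesis
    using selected_subset finite_selected by (simp add: card_Diff_subset card_Diff_subset_Int)
qed

text \<open>The first block of an unselected cluster lost against every selected block, so an
  injection of the unselected clusters into the selected blocks that are nobody's first block
  charges each unselected cluster to a block of at least its size.\<close>
lemma sum_card_core_unselected: "(\<Sum>a\<in>represented - selected. card (core a)) \<le> 2 * card bad"
proof -
  obtain f where f: "f ` (represented - selected) \<subseteq> J ` {..<k} - first_block ` represented"
    "inj_on f (represented - selected)"
    using card_le_inj[OF _ _ card_unselected_le] finite_represented by auto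
  have "card (core a) \<le> card (Bs ! f a)" if a: "a \<in> represented - selected" for a
  proof -
    obtain b where "b < k" "f a = J b" using f(1) a by blast
    then have "card (Bs ! first_block a) \<le> card (Bs ! f a)"
      using J_largest first_block(1) a by (simp add: selected_def)
    then show ?thesis using card_core_le_first_block a by (meson DiffD1 order_trans)
  qed
  then have "(\<Sum>a\<in>represented - selected. card (core a))
      \<le> (\<Sum>a\<in>represented - selected. card (Bs ! f a))"
    by (rule sum_mono)
  also have "\<dots> = (\<Sum>t\<in>f ` (represented - selected). card (Bs ! t))"
    using sum.reindex[OF f(2), of "\<lambda>t. card (Bs ! t)"] by simp
  also have "\<dots> \<le> (\<Sum>t\<in>{..<length Bs} - first_block ` represented. card (Bs ! t))"
    using f(1) J_less by (intro sum_mono2) auto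
  also have "\<dots> \<le> 2 * card bad" by (rule sum_card_other_blocks)
  finally show ?thesis .
qed

lemma exists_bij_selected:
  "\<exists>\<pi>. bij_betw \<pi> {..<k} {..<k} \<and> (\<forall>a\<in>selected. J (\<pi> a) = first_block a)"
proof -
  define p where "p a = inv_into {..<k} J (first_block a)" for a
  have p: "p a \<in> {..<k}" "J (p a) = first_block a" if "a \<in> selected" for a
  proof -
    have J: "first_block a \<in> J ` {..<k}" using that by (simp add: selected_def)
    show "p a \<in> {..<k}" "J (p a) = first_block a"
      using inv_into_into[OF J] f_inv_into_f[OF J] unfolding p_def by auto
  qed
  have "inj_on p selected"
  proof (rule inj_onI)
    fix a b assume ab: "a \<in> selected" "b \<in> selected" "p a = p b"
    then have "first_block a = first_block b" using p(2) by metis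
    then show "a = b" using inj_on_first_block ab selected_subset by (auto dest: inj_onD)
  qed
  moreover have "selected \<subseteq> {..<k}" using selected_subset by (auto simp: represented_def)
  ultimately obtain \<pi> where "bij_betw \<pi> {..<k} {..<k}" "\<forall>a\<in>selected. \<pi> a = p a"
    using inj_on_extends_to_bij[of "{..<k}" p selected] p(1) by blast
  then show ?thesis using p(2) by auto
qed

lemma sum_card_core_selected:
  assumes \<pi>: "bij_betw \<pi> {..<k} {..<k}" "\<forall>a\<in>selected. J (\<pi> a) = first_block a"
  shows "(\<Sum>a\<in>selected. card (core a)) \<le> card (\<Union>a<k. cluster n \<sigma> a \<inter> U (\<pi> a)) + card bad"
proof -
  have "(\<Sum>a\<in>selected. card (core a \<inter> Bs ! first_block a))
      = card (\<Union>a\<in>selected. core a \<inter> Bs ! first_block a)"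
    using finite_selected finite_core core_disjoint by (intro card_UN_disjoint[symmetric]) auto
  also have "\<dots> \<le> card (\<Union>a<k. cluster n \<sigma> a \<inter> U (\<pi> a))"
  proof (rule card_mono)
    show "finite (\<Union>a<k. cluster n \<sigma> a \<inter> U (\<pi> a))" by (simp add: cluster_def)
    have "a < k" "Bs ! first_block a \<subseteq> U (\<pi> a)" if "a \<in> selected" for a
      using that selected_subset \<pi> J_subset_U[of "\<pi> a"] by (auto simp: represented_def bij_betw_def)
    then show "(\<Union>a\<in>selected. core a \<inter> Bs ! first_block a) \<subseteq> (\<Union>a<k. cluster n \<sigma> a \<inter> U (\<pi> a))"
      by (fastforce simp: core_def)
  qed
  finally have "(\<Sum>a\<in>selected. card (core a \<inter> Bs ! first_block a))
      \<le> card (\<Union>a<k. cluster n \<sigma> a \<inter> U (\<pi> a))" .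
  moreover have "(\<Sum>a\<in>selected. card (bad \<inter> Bs ! first_block a)) \<le> card bad"
    using sum_mono2[OF finite_represented selected_subset] sum_card_bad_first_blocks
    by (meson order_trans zero_le)
  moreover have "(\<Sum>a\<in>selected. card (core a)) \<le> (\<Sum>a\<in>selected. card (core a \<inter> Bs ! first_block a))
      + (\<Sum>a\<in>selected. card (bad \<inter> Bs ! first_block a))"
    using card_core_le_first_block_split selected_subset
    by (simp add: sum.distrib[symmetric] sum_mono subset_iff)
  ultimately show ?thesis by linarith
qed

lemma exists_bij_matching_most:
  "\<exists>\<pi>. bij_betw \<pi> {..<k} {..<k} \<and> n \<le> card (\<Union>a<k. cluster n \<sigma> a \<inter> U (\<pi> a)) + 4 * card bad"
proof -
  obtain \<pi> where \<pi>: "bij_betw \<pi> {..<k} {..<k}" "\<forall>a\<in>selected. J (\<pi> a) = first_block a"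
    using exists_bij_selected by blast
  have "(\<Sum>a\<in>represented. card (core a))
      = (\<Sum>a\<in>represented - selected. card (core a)) + (\<Sum>a\<in>selected. card (core a))"
    using sum.subset_diff[OF selected_subset finite_represented] by simp
  then show ?thesis
    using \<pi> sum_card_core_selected[OF \<pi>] sum_card_core_unselected sum_card_core_add_card_bad
    by (intro exI[of _ \<pi>]) linarith
qed

end

context step1_run
begin

lemma card_bad_le:
  "real (card bad) * (real n / (8 * real k)) \<le> entry_l1 n (\<lambda>i j. Y i j - Ystar \<sigma> i j)"
  unfolding bad_def entry_l1_diff_Ystar atLeast0LessThan
  by (rule card_gt_mult_le_sum) (simp_all add: row_err_nonneg)

lemma exists_bij_recovering:
  assumes "0 < n" and "step2_output n k Bs U"
  shows "\<exists>\<pi>. bij_betw \<pi> {..<k} {..<k} \<and>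
    (1 - 32 * (entry_l1 n (\<lambda>i j. Y i j - Ystar \<sigma> i j) / entry_l1 n (Ystar \<sigma>))) * real n
      \<le> real (card (\<Union>a<k. cluster n \<sigma> a \<inter> U (\<pi> a)))"
proof -
  obtain J where "inj_on J {..<k}" "J ` {..<k} \<subseteq> {..<length Bs}"
    "\<forall>a<k. \<forall>i<length Bs. i \<notin> J ` {..<k} \<longrightarrow> card (Bs ! i) \<le> card (Bs ! J a)"
    "\<forall>a<k. Bs ! J a \<subseteq> U a \<and> card (U a) = n div k"
    using assms(2) unfolding step2_output_def by (elim exE conjE) blast
  then interpret step2_run n k Y \<sigma> Bs J U
    by unfold_locales auto
  obtain \<pi> where \<pi>: "bij_betw \<pi> {..<k} {..<k}"
    "n \<le> card (\<Union>a<k. cluster n \<sigma> a \<inter> U (\<pi> a)) + 4 * card bad"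
    using exists_bij_matching_most by blast
  define \<delta> where "\<delta> = entry_l1 n (\<lambda>i j. Y i j - Ystar \<sigma> i j)"
  have E: "entry_l1 n (Ystar \<sigma>) = real n * (real n / real k)"
    using entry_l1_Ystar[of n \<sigma> k "n div k"] \<sigma>_less card_cluster k_dvd_n
    by (simp add: real_of_nat_div)
  have "(1 - 32 * (\<delta> / entry_l1 n (Ystar \<sigma>))) * real n = real n - 32 * \<delta> * real k / real n"
    unfolding E using assms(1) k_pos by (simp add: field_simps)
  moreover have "4 * real (card bad) \<le> 32 * \<delta> * real k / real n"
    using card_bad_le assms(1) k_pos by (simp add: \<delta>_def field_simps)
  ultimately show ?thesis using \<pi> unfolding \<delta>_def by (intro exI[of _ \<pi>]) linarith
qed

end

theorem lemma13:
  "\<exists>C>0. \<forall>(n::nat) (k::nat) (d::nat) (h::nat \<Rightarrow> nat \<Rightarrow> real) (\<sigma>::nat \<Rightarrow> nat)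
        (Y::nat \<Rightarrow> nat \<Rightarrow> real) (Bs::nat set list) (U::nat \<Rightarrow> nat set).
     n \<ge> 4 \<longrightarrow> k \<ge> 2 \<longrightarrow> k dvd n \<longrightarrow>
     (\<forall>i<n. \<sigma> i < k) \<longrightarrow> (\<forall>a<k. card (cluster n \<sigma> a) = n div k) \<longrightarrow>
     sdp_optimal n k d h Y \<longrightarrow>
     step1_output n k Y Bs \<longrightarrow> step2_output n k Bs U \<longrightarrow>
     (\<exists>\<pi>. bij_betw \<pi> {..<k} {..<k} \<and>
        real (card (\<Union>a<k. cluster n \<sigma> a \<inter> U (\<pi> a)))
          \<ge> (1 - C * (entry_l1 n (\<lambda>i j. Y i j - Ystar \<sigma> i j) / entry_l1 n (Ystar \<sigma>))) * real n)"
  by (intro exI[of _ 32] conjI allI impI zero_less_numeral step1_run.exists_bij_recovering)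
    (auto simp: step1_run_def)

end
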